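(* Let $n \geq 3$ and let $\Omega = \bigcap_{m=0}^q \{u_m \leq 0\} \subset \mathbb{R}^n$ be a compact convex polytope with non-empty interior satisfying the standing assumptions described in the context. Then for every $\varepsilon \in (0,1)$ there exists $\delta > 0$ with the following property: if $0 \leq j < k \leq q$ and there exists a point $x \in \Omega$ with $-\delta \leq u_j(x) \leq 0$ and $-\delta \leq u_k(x) \leq 0$, then $\langle N_j, N_k \rangle \leq \varepsilon$.
   Context: Here $u_0,\dots,u_q$ are non-constant linear (affine) functions on $\mathbb{R}^n$ and $\Omega = \bigcap_{m=0}^q\{u_m\le 0\}$ is compact, convex, with non-empty interior. Standing assumptions: (a) for each $k$, the set $\{u_k>0\}\cap\bigcap_{m\neq k}\{u_m\le 0\}$ is non-empty; (b) the Euclidean gradient of each $u_k$ is a unit vector $N_k\in S^{n-1}$; (c) for $0\le j<k\le q$, if there exists $x\in\Omega$ with $u_j(x)=u_k(x)=0$, then $\langle N_j,N_k\rangle\le 0$ (Euclidean inner product). *)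

theory Defs
  imports "HOL-Analysis.Analysis"
begin

end

theory Submission
  imports Defs
begin

text \<open>Only compactness of \<Omega> and the angle condition matter. If \<open>N j \<bullet> N k > \<epsilon> > 0\<close>, the
  angle condition forbids \<open>u j\<close> and \<open>u k\<close> from vanishing simultaneously on \<Omega>, so the
  continuous function \<open>min (u j) (u k)\<close> is negative on the compact set \<Omega> and hence bounded
  away from 0 there; a \<delta> below this bound works for the pair, and there are only finitely many
  pairs.\<close>

lemma compact_negative_eventually_below:
  fixes h :: "'a::topological_space \<Rightarrow> real"
  assumes "compact S" and "continuous_on S h" and "\<forall>x\<in>S. h x < 0"
  shows "\<forall>\<^sub>F \<delta> in at_right 0. \<forall>x\<in>S. h x < -\<delta>"
proof (cases "S = {}")
  case False
  obtain x0 where "x0 \<in> S" and "\<forall>x\<in>S. h x \<le> h x0"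
    using continuous_attains_sup[OF assms(1) False assms(2)] by blast
  then show ?thesis
    using assms(3) unfolding eventually_at_right_field by (intro exI[of _ "- h x0"]) force
qed simp

lemma compact_eventually_not_both_near_zero:
  fixes f g :: "'a::topological_space \<Rightarrow> real"
  assumes "compact S" and "continuous_on S f" and "continuous_on S g"
    and "\<forall>x\<in>S. f x \<le> 0 \<and> g x \<le> 0 \<and> \<not> (f x = 0 \<and> g x = 0)"
  shows "\<forall>\<^sub>F \<delta> in at_right 0. \<not> (\<exists>x\<in>S. -\<delta> \<le> f x \<and> -\<delta> \<le> g x)"
proof -
  have "continuous_on S (\<lambda>x. min (f x) (g x))"
    using assms(2,3) by (rule continuous_on_min)
  moreover have "\<forall>x\<in>S. min (f x) (g x) < 0"
    using assms(4) by (auto simp: min_def)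
  ultimately have "\<forall>\<^sub>F \<delta> in at_right 0. \<forall>x\<in>S. min (f x) (g x) < -\<delta>"
    by (rule compact_negative_eventually_below[OF assms(1)])
  then show ?thesis
    by (rule eventually_mono) auto
qed

lemma ex_pos_ball_finite_at_right:
  assumes "finite A" and "\<forall>a\<in>A. \<forall>\<^sub>F \<delta> in at_right (0::real). P \<delta> a"
  shows "\<exists>\<delta>>0. \<forall>a\<in>A. P \<delta> a"
proof -
  have "\<forall>\<^sub>F \<delta> in at_right (0::real). \<delta> > 0 \<and> (\<forall>a\<in>A. P \<delta> a)"
    using assms by (intro eventually_conj eventually_at_right_less eventually_ball_finite)
  then show ?thesis
    using eventually_happens' trivial_limit_at_right_real by blast
qed

lemma affine_continuous_on:
  assumes "\<And>x. u x = a \<bullet> x + u 0"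
  shows "continuous_on S u"
proof -
  have eq: "u = (\<lambda>x. a \<bullet> x + u 0)" by (rule ext) (rule assms)
  show ?thesis by (subst eq) (intro continuous_intros)
qed

theorem lemma2p2:
  fixes u :: "nat \<Rightarrow> real^'n \<Rightarrow> real"
    and N :: "nat \<Rightarrow> real^'n"
    and q :: nat
    and \<Omega> :: "(real^'n) set"
  assumes dim: "CARD('n) \<ge> 3"
    and affine: "\<And>k x. k \<le> q \<Longrightarrow> u k x = N k \<bullet> x + u k 0"
    and unit: "\<And>k. k \<le> q \<Longrightarrow> norm (N k) = 1"
    and Omega_def: "\<Omega> = {x. \<forall>m\<le>q. u m x \<le> 0}"
    and compact: "compact \<Omega>"
    and convex: "convex \<Omega>"
    and interior: "interior \<Omega> \<noteq> {}"
    and nonred: "\<And>k. k \<le> q \<Longrightarrow> \<exists>x. u k x > 0 \<and> (\<forall>m\<le>q. m \<noteq> k \<longrightarrow> u m x \<le> 0)"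
    and angle: "\<And>j k. j < k \<Longrightarrow> k \<le> q \<Longrightarrow> (\<exists>x\<in>\<Omega>. u j x = 0 \<and> u k x = 0) \<Longrightarrow> N j \<bullet> N k \<le> 0"
  shows "\<forall>\<epsilon>. 0 < \<epsilon> \<and> \<epsilon> < 1 \<longrightarrow>
           (\<exists>\<delta>>0. \<forall>j k. j < k \<and> k \<le> q \<and>
               (\<exists>x\<in>\<Omega>. -\<delta> \<le> u j x \<and> u j x \<le> 0 \<and> -\<delta> \<le> u k x \<and> u k x \<le> 0)
               \<longrightarrow> N j \<bullet> N k \<le> \<epsilon>)"
proof (intro allI impI)
  fix \<epsilon> :: real
  assume \<epsilon>: "0 < \<epsilon> \<and> \<epsilon> < 1"
  define pairs where "pairs = {(j, k). j < k \<and> k \<le> q}"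
  have continuous_u: "continuous_on \<Omega> (u i)" if "i \<le> q" for i
    using affine[OF that] by (rule affine_continuous_on)
  have "finite pairs"
    by (rule finite_subset[of _ "{..q} \<times> {..q}"]) (auto simp: pairs_def)
  moreover have "\<forall>\<^sub>F \<delta> in at_right 0.
      (\<exists>x\<in>\<Omega>. -\<delta> \<le> u j x \<and> -\<delta> \<le> u k x) \<longrightarrow> N j \<bullet> N k \<le> \<epsilon>"
    if "(j, k) \<in> pairs" for j k
  proof (cases "N j \<bullet> N k \<le> \<epsilon>")
    case False
    from that have jk: "j < k" "k \<le> q" by (auto simp: pairs_def)
    have "\<forall>x\<in>\<Omega>. u j x \<le> 0 \<and> u k x \<le> 0 \<and> \<not> (u j x = 0 \<and> u k x = 0)"
      using jk False \<epsilon> angle[OF jk] by (auto simp: Omega_def)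
    with jk have "\<forall>\<^sub>F \<delta> in at_right 0. \<not> (\<exists>x\<in>\<Omega>. -\<delta> \<le> u j x \<and> -\<delta> \<le> u k x)"
      by (intro compact_eventually_not_both_near_zero compact continuous_u) auto
    then show ?thesis
      by (rule eventually_mono) blast
  qed simp
  ultimately have "\<exists>\<delta>>0. \<forall>p\<in>pairs.
      (\<exists>x\<in>\<Omega>. -\<delta> \<le> u (fst p) x \<and> -\<delta> \<le> u (snd p) x) \<longrightarrow> N (fst p) \<bullet> N (snd p) \<le> \<epsilon>"
    by (intro ex_pos_ball_finite_at_right) auto
  then show "\<exists>\<delta>>0. \<forall>j k. j < k \<and> k \<le> q \<and>
               (\<exists>x\<in>\<Omega>. -\<delta> \<le> u j x \<and> u j x \<le> 0 \<and> -\<delta> \<le> u k x \<and> u k x \<le> 0)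
               \<longrightarrow> N j \<bullet> N k \<le> \<epsilon>"
    by (elim ex_forward) (auto simp: pairs_def)
qed

end
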